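(* Let $k>t+1$, $n>2k-t$, and let $\mathcal{S}_a$ be a maximal set of $k$-spaces in $\mathrm{AG}(n,q)$ pairwise intersecting in at least a $t$-space. Let $\psi(\mathcal{S}_a)=\min\{\dim T: T\text{ an affine subspace},\ \dim(T\cap\alpha)\geq t\ \forall\alpha\in\mathcal{S}_a\}$. If $\psi(\mathcal{S}_a)=t+x$ with $x\geq 2$, then \[|\mathcal{S}_a|\leq q^x\left[{t+x\atop x}\right]_q(\theta_{k-t})^x\left[{n-t-x\atop k-t-x}\right]_q.\]
   Context: Affine subspaces intersect in at least a $t$-space if their affine intersection has dimension at least $t$. $\left[{n\atop k}\right]_q=\frac{(q^n-1)\cdots(q^{n-k+1}-1)}{(q^k-1)\cdots(q-1)}$ for $k>0$, $=1$ for $k=0$; $\theta_m=\frac{q^{m+1}-1}{q-1}$. Maximal means no further affine $k$-space can be added keeping the property. *)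

theory Defs
  imports "HOL-Analysis.Analysis"
begin

text \<open>Points of AG(n,q) are vectors in F^'n with F a finite field, q = CARD(F), n = CARD('n).\<close>

definition affine_subspace :: "('a::field ^ 'n) set \<Rightarrow> bool" where
  "affine_subspace S \<longleftrightarrow> (\<exists>p W. vec.subspace W \<and> S = (\<lambda>w. p + w) ` W)"

definition adim :: "('a::field ^ 'n) set \<Rightarrow> nat" where
  "adim S = vec.dim {x - y | x y. x \<in> S \<and> y \<in> S}"

definition kspace :: "nat \<Rightarrow> ('a::field ^ 'n) set \<Rightarrow> bool" where
  "kspace k S \<longleftrightarrow> affine_subspace S \<and> adim S = k"

text \<open>Two affine subspaces intersect in at least a t-space (empty intersection has dimension -1).\<close>
definition meets_t :: "nat \<Rightarrow> ('a::field ^ 'n) set \<Rightarrow> ('a ^ 'n) set \<Rightarrow> bool" where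
  "meets_t t A B \<longleftrightarrow> A \<inter> B \<noteq> {} \<and> adim (A \<inter> B) \<ge> t"

definition max_t_intersecting :: "nat \<Rightarrow> nat \<Rightarrow> ('a::field ^ 'n) set set \<Rightarrow> bool" where
  "max_t_intersecting k t SS \<longleftrightarrow>
     (\<forall>A\<in>SS. kspace k A) \<and> (\<forall>A\<in>SS. \<forall>B\<in>SS. meets_t t A B) \<and>
     (\<forall>B. kspace k B \<and> B \<notin> SS \<longrightarrow> \<not> (\<forall>A\<in>SS. meets_t t A B))"

definition psi :: "nat \<Rightarrow> ('a::field ^ 'n) set set \<Rightarrow> nat" where
  "psi t SS = (LEAST d. \<exists>T. affine_subspace T \<and> adim T = d \<and> (\<forall>A\<in>SS. meets_t t T A))"

definition qbinom :: "nat \<Rightarrow> nat \<Rightarrow> nat \<Rightarrow> real" where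
  "qbinom q n k = (if k = 0 then 1 else
     (\<Prod>i<k. (real q ^ (n - i) - 1)) / (\<Prod>i<k. (real q ^ (i + 1) - 1)))"

definition theta :: "nat \<Rightarrow> nat \<Rightarrow> real" where
  "theta q m = (real q ^ (m + 1) - 1) / (real q - 1)"

end

theory Submission
  imports Defs
begin

text \<open>
  Let \<open>T\<close> be an affine \<open>(t + x)\<close>-space meeting every member of the family in at least a
  \<open>t\<close>-space, as provided by the definition of \<open>\<psi>\<close>. Every member then contains one of the at most
  \<open>q\<^sup>x [t+x, x]\<^sub>q\<close> affine \<open>t\<close>-spaces of \<open>T\<close>. Through an affine space \<open>\<tau>\<close> of dimension
  \<open>t + x - j\<close> pass at most \<open>\<theta>\<^bsub>k-t\<^esub>\<^sup>j [n-t-x, k-t-x]\<^sub>q\<close> members. For \<open>j = 0\<close> this counts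
  \<open>k\<close>-spaces through a \<open>(t + x)\<close>-space. For \<open>j > 0\<close>, minimality of \<open>\<psi>\<close> gives a member \<open>B\<close>
  meeting \<open>\<tau>\<close> in less than a \<open>t\<close>-space; every member through \<open>\<tau>\<close> meets \<open>B\<close> in a \<open>t\<close>-space
  and therefore contains one of at most \<open>\<theta>\<^bsub>k-t\<^esub>\<close> spaces of dimension one more through \<open>\<tau>\<close>,
  all inside the span of \<open>\<tau>\<close> and \<open>B\<close>.
\<close>

section \<open>Counting\<close>

lemma double_counting_le:
  fixes R :: "'a \<Rightarrow> 'b \<Rightarrow> bool"
  assumes "finite A" "finite B"
    and "\<And>a. a \<in> A \<Longrightarrow> real (card {b\<in>B. R a b}) = c"
    and "\<And>b. b \<in> B \<Longrightarrow> real (card {a\<in>A. R a b}) \<le> d"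
  shows "real (card A) * c \<le> real (card B) * d"
proof -
  have card_eq_sum: "real (card {x\<in>X. P x}) = (\<Sum>x\<in>X. if P x then 1 else 0)" if "finite X" for X P
    using that by (simp add: sum.If_cases Int_def conj_commute)
  have "real (card A) * c = (\<Sum>a\<in>A. \<Sum>b\<in>B. if R a b then 1 else 0)"
    using assms(1-3) by (simp add: card_eq_sum)
  also have "\<dots> = (\<Sum>b\<in>B. \<Sum>a\<in>A. if R a b then 1 else 0)"
    by (rule sum.swap)
  also have "\<dots> \<le> real (card B) * d"
    using sum_mono[of B _ "\<lambda>_. d"] assms(1,2,4) by (simp add: card_eq_sum)
  finally show ?thesis .
qed

lemma card_le_of_cover:
  assumes "finite I" "\<And>i. i \<in> I \<Longrightarrow> finite (F i)" "S \<subseteq> (\<Union>i\<in>I. F i)"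
    and "\<And>i. i \<in> I \<Longrightarrow> real (card (F i)) \<le> c"
  shows "real (card S) \<le> real (card I) * c"
proof -
  have "card S \<le> card (\<Union>i\<in>I. F i)"
    using assms(1-3) by (intro card_mono) auto
  also have "\<dots> \<le> (\<Sum>i\<in>I. card (F i))"
    using assms(1) by (rule card_UN_le)
  finally have "real (card S) \<le> (\<Sum>i\<in>I. real (card (F i)))"
    by (metis of_nat_le_iff of_nat_sum)
  also have "\<dots> \<le> real (card I) * c"
    using sum_mono[of I _ "\<lambda>_. c"] assms(4) by simp
  finally show ?thesis .
qed

section \<open>Gaussian binomial coefficients\<close>

lemma qbinom_Suc_Suc:
  "qbinom q (Suc a) (Suc b) = (real q ^ Suc a - 1) / (real q ^ Suc b - 1) * qbinom q a b"
proof -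
  have "(\<Prod>i<Suc b. real q ^ (Suc a - i) - 1) = (real q ^ Suc a - 1) * (\<Prod>i<b. real q ^ (a - i) - 1)"
    by (subst prod.lessThan_Suc_shift) simp
  then show ?thesis
    by (cases "b = 0") (simp_all add: qbinom_def)
qed

lemma qbinom_nonneg:
  assumes "1 \<le> q"
  shows "0 \<le> qbinom q a b"
proof -
  have "1 \<le> real q ^ e" and "1 \<le> real q * real q ^ e" for e
    using assms one_le_power[of "real q" "Suc e"] by simp_all
  then show ?thesis
    unfolding qbinom_def by (auto intro!: divide_nonneg_nonneg prod_nonneg)
qed

lemma one_less_real_power: "2 \<le> q \<Longrightarrow> 1 < real q ^ Suc m"
  by (intro one_less_power) auto

lemma theta_pos: "2 \<le> q \<Longrightarrow> 0 < theta q m"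
  unfolding theta_def using one_less_real_power[of q m] by simp

lemma theta_mono: "2 \<le> q \<Longrightarrow> a \<le> b \<Longrightarrow> theta q a \<le> theta q b"
  unfolding theta_def by (intro divide_right_mono diff_right_mono power_increasing) auto

lemma qbinom_Suc_Suc_theta:
  "2 \<le> q \<Longrightarrow> qbinom q (Suc a) (Suc b) = theta q a / theta q b * qbinom q a b"
  unfolding qbinom_Suc_Suc theta_def by simp

text \<open>\<open>qfact q m\<close> is \<open>(q - 1)\<^sup>m\<close> times the q-factorial \<open>[m]\<^sub>q!\<close>; the powers of \<open>q - 1\<close>
  cancel in the quotient below.\<close>

definition qfact :: "nat \<Rightarrow> nat \<Rightarrow> real" where
  "qfact q m = (\<Prod>i<m. real q ^ (i + 1) - 1)"

lemma qfact_pos: "2 \<le> q \<Longrightarrow> 0 < qfact q m"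
  unfolding qfact_def using one_less_real_power by (intro prod_pos) simp

lemma qbinom_eq_qfact:
  assumes "2 \<le> q"
  shows "qbinom q (a + b) b = qfact q (a + b) / (qfact q b * qfact q a)"
proof (induction b)
  case 0
  have "qfact q 0 = 1" by (simp add: qfact_def)
  then show ?case using qfact_pos[OF assms, of a] by (simp add: qbinom_def)
next
  case (Suc b)
  have nonzero: "real q ^ Suc b - 1 \<noteq> 0" "qfact q b \<noteq> 0" "qfact q a \<noteq> 0"
    using one_less_real_power[OF assms] qfact_pos[OF assms] by (simp_all add: less_imp_neq[symmetric])
  have "qbinom q (a + Suc b) (Suc b)
      = (real q ^ Suc (a + b) - 1) / (real q ^ Suc b - 1) * qbinom q (a + b) b"
    using qbinom_Suc_Suc[of q "a + b" b] by simp
  also have "\<dots> = (real q ^ Suc (a + b) - 1) / (real q ^ Suc b - 1) * (qfact q (a + b) / (qfact q b * qfact q a))"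
    using Suc by simp
  also have "\<dots> = qfact q (Suc (a + b)) / (qfact q (Suc b) * qfact q a)"
    using nonzero by (simp add: qfact_def field_simps)
  finally show ?case by simp
qed

lemma qbinom_symmetric: "2 \<le> q \<Longrightarrow> qbinom q (a + b) b = qbinom q (a + b) a"
  using qbinom_eq_qfact[of q a b] qbinom_eq_qfact[of q b a] by (simp add: ac_simps)

section \<open>Subspaces of a finite vector space\<close>

lemma two_le_card_field: "2 \<le> CARD('a::{finite,field})"
proof -
  have "card {0::'a, 1} \<le> CARD('a)" by (rule card_mono) auto
  then show ?thesis by simp
qed

lemma card_span_insert:
  fixes B :: "('a::{finite,field} ^ 'n) set"
  assumes v: "v \<notin> vec.span B"
  shows "card (vec.span (insert v B)) = CARD('a) * card (vec.span B)"
proof -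
  let ?f = "\<lambda>(c, y). c *s v + y"
  have "vec.span (insert v B) = ?f ` (UNIV \<times> vec.span B)"
  proof (rule set_eqI)
    fix z
    have "z \<in> vec.span (insert v B) \<longleftrightarrow> (\<exists>c. z - c *s v \<in> vec.span B)"
      by (rule vec.span_breakdown_eq)
    also have "\<dots> \<longleftrightarrow> z \<in> ?f ` (UNIV \<times> vec.span B)"
    proof
      assume "\<exists>c. z - c *s v \<in> vec.span B"
      then obtain c where "z - c *s v \<in> vec.span B" ..
      then show "z \<in> ?f ` (UNIV \<times> vec.span B)"
        by (intro image_eqI[where x = "(c, z - c *s v)"]) auto
    next
      assume "z \<in> ?f ` (UNIV \<times> vec.span B)"
      then obtain c y where "z = c *s v + y" "y \<in> vec.span B" by auto
      then show "\<exists>c. z - c *s v \<in> vec.span B" by (metis add_diff_cancel_left')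
    qed
    finally show "z \<in> vec.span (insert v B) \<longleftrightarrow> z \<in> ?f ` (UNIV \<times> vec.span B)" .
  qed
  moreover have "inj_on ?f (UNIV \<times> vec.span B)"
  proof (rule inj_onI, clarsimp)
    fix c d y z
    assume y: "y \<in> vec.span B" and z: "z \<in> vec.span B" and eq: "c *s v + y = d *s v + z"
    have "(c - d) *s v = z - y"
      using eq by (simp add: vec.scale_left_diff_distrib algebra_simps)
    then have "(c - d) *s v \<in> vec.span B"
      using y z by (simp add: vec.span_diff)
    then have "c = d"
      using v vec.span_scale[of "(c - d) *s v" B "inverse (c - d)"]
      by (metis right_minus_eq vec.scale_scale left_inverse vec.scale_one)
    then show "c = d \<and> y = z" using eq by simp
  qed
  ultimately show ?thesis
    by (simp add: card_image card_cartesian_product)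
qed

lemma card_span_independent:
  fixes B :: "('a::{finite,field} ^ 'n) set"
  assumes "finite B" and "vec.independent B"
  shows "card (vec.span B) = CARD('a) ^ card B"
  using assms
proof (induction B rule: finite_induct)
  case empty
  then show ?case by simp
next
  case (insert v B)
  then have "vec.independent B" and "v \<notin> vec.span B"
    by (auto simp: vec.independent_insert)
  then show ?case
    using insert card_span_insert[OF \<open>v \<notin> vec.span B\<close>] by simp
qed

lemma card_subspace:
  fixes S :: "('a::{finite,field} ^ 'n) set"
  assumes "vec.subspace S"
  shows "card S = CARD('a) ^ vec.dim S"
proof -
  obtain B where "B \<subseteq> S" "vec.independent B" "S \<subseteq> vec.span B" "card B = vec.dim S"
    by (rule vec.basis_exists)
  moreover have "vec.span B = S"
    using calculation assms by (simp add: vec.span_subspace)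
  ultimately show ?thesis
    using card_span_independent[of B] vec.indep_card_eq_dim_span by force
qed

lemma dim_span_insert:
  fixes V :: "('a::field ^ 'n) set"
  assumes "vec.subspace V" and "u \<notin> V"
  shows "vec.dim (vec.span (insert u V)) = vec.dim V + 1"
proof -
  have "u \<notin> vec.span V" using assms by (metis vec.span_eq_iff)
  then show ?thesis by (simp add: vec.dim_insert)
qed

lemma dim_le_dim_sums:
  fixes S T M :: "('a::field ^ 'n) set"
  assumes "vec.subspace S" "vec.subspace T" "M \<subseteq> {x + y | x y. x \<in> S \<and> y \<in> T}"
  shows "vec.dim M + vec.dim (S \<inter> T) \<le> vec.dim S + vec.dim T"
proof -
  have "vec.dim M \<le> vec.dim {x + y | x y. x \<in> S \<and> y \<in> T}"
    using assms(3) by (rule vec.dim_subset)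
  then show ?thesis using vec.dim_sums_Int[OF assms(1,2)] by linarith
qed

lemma dim_add_le_dim_Int:
  fixes S T M :: "('a::field ^ 'n) set"
  assumes "vec.subspace S" "vec.subspace T" "vec.subspace M" "S \<subseteq> M" "T \<subseteq> M"
  shows "vec.dim S + vec.dim T \<le> vec.dim M + vec.dim (S \<inter> T)"
proof -
  have "{x + y | x y. x \<in> S \<and> y \<in> T} \<subseteq> M"
    using assms by (auto intro: vec.subspace_add)
  then have "vec.dim {x + y | x y. x \<in> S \<and> y \<in> T} \<le> vec.dim M"
    by (rule vec.dim_subset)
  then show ?thesis using vec.dim_sums_Int[OF assms(1,2)] by linarith
qed

lemma span_insert_subset_sums:
  fixes Q VB V :: "('a::field ^ 'n) set"
  assumes Q: "vec.subspace Q" "V \<subseteq> Q" "c - p \<in> Q" and VB: "vec.subspace VB" "c - b \<in> VB"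
  shows "vec.span (insert (b - p) (V \<union> VB)) \<subseteq> {x + y | x y. x \<in> Q \<and> y \<in> VB}"
proof (intro vec.span_minimal vec.subspace_sums Q(1) VB(1))
  let ?S = "{x + y | x y. x \<in> Q \<and> y \<in> VB}"
  have sumI: "x + y \<in> ?S" if "x \<in> Q" "y \<in> VB" for x y
    using that by blast
  have "(c - p) + - (c - b) \<in> ?S"
    by (rule sumI[OF Q(3) vec.subspace_neg[OF VB]])
  moreover have "x + 0 \<in> ?S" if "x \<in> V" for x
    using that Q(2) vec.subspace_0[OF VB(1)] by (intro sumI) auto
  moreover have "0 + y \<in> ?S" if "y \<in> VB" for y
    using that vec.subspace_0[OF Q(1)] by (intro sumI) auto
  ultimately show "insert (b - p) (V \<union> VB) \<subseteq> ?S" by auto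
qed

definition intermediate_subspaces :: "('a::field ^ 'n) set \<Rightarrow> ('a ^ 'n) set \<Rightarrow> nat \<Rightarrow> ('a ^ 'n) set set"
  where "intermediate_subspaces V W d = {U. vec.subspace U \<and> V \<subseteq> U \<and> U \<subseteq> W \<and> vec.dim U = d}"

lemma span_insert_mem_intermediate_subspaces:
  fixes V W :: "('a::field ^ 'n) set"
  assumes "vec.subspace V" "vec.subspace W" "V \<subseteq> W" "u \<in> W" "u \<notin> V"
  shows "vec.span (insert u V) \<in> intermediate_subspaces V W (vec.dim V + 1)"
proof -
  have "vec.span (insert u V) \<subseteq> W" using assms by (intro vec.span_minimal) auto
  then show ?thesis
    using assms vec.span_superset[of "insert u V"] dim_span_insert[of V u]
    by (auto simp: intermediate_subspaces_def)
qed

lemma span_insert_eq_intermediate_subspace: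
  fixes V L :: "('a::field ^ 'n) set"
  assumes "vec.subspace V" "L \<in> intermediate_subspaces V W (vec.dim V + 1)" "u \<in> L" "u \<notin> V"
  shows "vec.span (insert u V) = L"
proof (rule vec.subspace_dim_equal)
  have "vec.span (insert u V) \<in> intermediate_subspaces V L (vec.dim V + 1)"
    using assms by (intro span_insert_mem_intermediate_subspaces) (auto simp: intermediate_subspaces_def)
  then show "vec.span (insert u V) \<subseteq> L" "vec.dim L \<le> vec.dim (vec.span (insert u V))"
    using assms(2) by (auto simp: intermediate_subspaces_def)
qed (use assms in \<open>auto simp: intermediate_subspaces_def\<close>)

lemma intermediate_subspaces_nonempty:
  fixes V M :: "('a::field ^ 'n) set"
  shows "vec.subspace V \<Longrightarrow> vec.subspace M \<Longrightarrow> V \<subseteq> M \<Longrightarrow> vec.dim V \<le> d \<Longrightarrow> d \<le> vec.dim M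
    \<Longrightarrow> intermediate_subspaces V M d \<noteq> {}"
proof (induction "d - vec.dim V" arbitrary: V)
  case 0
  then have "V \<in> intermediate_subspaces V M d" by (simp add: intermediate_subspaces_def)
  then show ?case by blast
next
  case (Suc j)
  then have "\<not> M \<subseteq> V" using vec.dim_subset[of M V] by auto
  then obtain u where u: "u \<in> M" "u \<notin> V" by auto
  let ?V' = "vec.span (insert u V)"
  have "?V' \<in> intermediate_subspaces V M (vec.dim V + 1)"
    using span_insert_mem_intermediate_subspaces[of V M u] Suc.prems u by blast
  then have V': "vec.subspace ?V'" "V \<subseteq> ?V'" "?V' \<subseteq> M" "vec.dim ?V' = vec.dim V + 1"
    unfolding intermediate_subspaces_def by auto
  have "intermediate_subspaces ?V' M d \<noteq> {}"
    using Suc.hyps(2) Suc.prems V' by (intro Suc.hyps(1)) auto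
  then obtain U where "U \<in> intermediate_subspaces ?V' M d" by blast
  then have "U \<in> intermediate_subspaces V M d"
    using V'(2) unfolding intermediate_subspaces_def by blast
  then show ?case by blast
qed

lemma card_covering_subspaces_mult:
  fixes V W :: "('a::{finite,field} ^ 'n) set"
  assumes V: "vec.subspace V" and W: "vec.subspace W" and VW: "V \<subseteq> W"
  shows "card (intermediate_subspaces V W (vec.dim V + 1)) * (CARD('a) ^ (vec.dim V + 1) - CARD('a) ^ vec.dim V)
           = CARD('a) ^ vec.dim W - CARD('a) ^ vec.dim V"
proof -
  let ?L = "intermediate_subspaces V W (vec.dim V + 1)"
  have cover: "W - V = (\<Union>L\<in>?L. L - V)"
  proof
    show "W - V \<subseteq> (\<Union>L\<in>?L. L - V)"
      using span_insert_mem_intermediate_subspaces[OF V W VW] vec.span_base[of _ "insert _ V"] by blast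
  qed (auto simp: intermediate_subspaces_def)
  have "(L1 - V) \<inter> (L2 - V) = {}" if "L1 \<in> ?L" "L2 \<in> ?L" "L1 \<noteq> L2" for L1 L2
    using that span_insert_eq_intermediate_subspace[OF V] by blast
  then have "card (W - V) = (\<Sum>L\<in>?L. card (L - V))"
    unfolding cover by (intro card_UN_disjoint) auto
  also have "\<dots> = (\<Sum>L\<in>?L. CARD('a) ^ (vec.dim V + 1) - CARD('a) ^ vec.dim V)"
    by (intro sum.cong refl)
      (auto simp: intermediate_subspaces_def card_Diff_subset card_subspace V)
  finally show ?thesis
    using VW by (simp add: card_Diff_subset card_subspace V W)
qed

lemma card_covering_subspaces:
  fixes V W :: "('a::{finite,field} ^ 'n) set"
  assumes "vec.subspace V" "vec.subspace W" "V \<subseteq> W" "vec.dim V < vec.dim W"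
  shows "real (card (intermediate_subspaces V W (vec.dim V + 1)))
           = theta CARD('a) (vec.dim W - vec.dim V - 1)"
proof -
  define q m c where "q = CARD('a)" and "m = vec.dim V"
    and "c = card (intermediate_subspaces V W (vec.dim V + 1))"
  define d where "d = vec.dim W - m - 1"
  have q: "2 \<le> q" unfolding q_def by (rule two_le_card_field)
  have W: "vec.dim W = m + Suc d" using assms(4) unfolding d_def m_def by simp
  have "c * (q ^ (m + 1) - q ^ m) = q ^ (m + Suc d) - q ^ m"
    using card_covering_subspaces_mult[OF assms(1-3)] unfolding c_def q_def m_def W by simp
  moreover have "q ^ m \<le> q ^ (m + 1)" and "q ^ m \<le> q ^ (m + Suc d)"
    using q by (intro power_increasing; simp)+
  ultimately have "real c * (real q ^ (m + 1) - real q ^ m) = real q ^ (m + Suc d) - real q ^ m"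
    by (metis of_nat_diff of_nat_mult of_nat_power)
  then have "real q ^ m * (real c * (real q - 1)) = real q ^ m * (real q ^ Suc d - 1)"
    by (simp add: algebra_simps power_add)
  then have "real c * (real q - 1) = real q ^ Suc d - 1"
    using q by simp
  then show ?thesis
    using q unfolding theta_def c_def q_def d_def m_def by (simp add: field_simps)
qed

text \<open>Double counting of the pairs \<open>L \<subseteq> U\<close> with \<open>dim L = dim V + 1\<close> and \<open>dim U = k\<close>.\<close>

lemma card_intermediate_subspaces_theta_le:
  fixes V W :: "('a::{finite,field} ^ 'n) set"
  assumes V: "vec.subspace V" and W: "vec.subspace W" "V \<subseteq> W"
    and k: "vec.dim V < k" "k \<le> vec.dim W"
    and bound: "\<And>L. L \<in> intermediate_subspaces V W (vec.dim V + 1) \<Longrightarrow>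
                  real (card (intermediate_subspaces L W k)) \<le> c"
  shows "real (card (intermediate_subspaces V W k)) * theta CARD('a) (k - vec.dim V - 1)
           \<le> theta CARD('a) (vec.dim W - vec.dim V - 1) * c"
proof -
  let ?U = "intermediate_subspaces V W k" and ?L = "intermediate_subspaces V W (vec.dim V + 1)"
  have "real (card {L\<in>?L. L \<subseteq> U}) = theta CARD('a) (k - vec.dim V - 1)" if U: "U \<in> ?U" for U
  proof -
    from U have "vec.subspace U" "V \<subseteq> U" "vec.dim U = k"
      unfolding intermediate_subspaces_def by auto
    moreover have "{L\<in>?L. L \<subseteq> U} = intermediate_subspaces V U (vec.dim V + 1)"
      using U unfolding intermediate_subspaces_def by auto
    ultimately show ?thesis
      using card_covering_subspaces[OF V, of U] k(1) by simp
  qed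
  moreover have "real (card {U\<in>?U. L \<subseteq> U}) \<le> c" if "L \<in> ?L" for L
  proof -
    have "{U\<in>?U. L \<subseteq> U} = intermediate_subspaces L W k"
      using that unfolding intermediate_subspaces_def by auto
    then show ?thesis using bound[OF that] by simp
  qed
  ultimately have "real (card ?U) * theta CARD('a) (k - vec.dim V - 1) \<le> real (card ?L) * c"
    by (intro double_counting_le) simp_all
  also have "real (card ?L) = theta CARD('a) (vec.dim W - vec.dim V - 1)"
    using card_covering_subspaces[OF V W] k by simp
  finally show ?thesis .
qed

lemma card_intermediate_subspaces_le:
  fixes V W :: "('a::{finite,field} ^ 'n) set"
  shows "vec.subspace V \<Longrightarrow> vec.subspace W \<Longrightarrow> V \<subseteq> W \<Longrightarrow>
    real (card (intermediate_subspaces V W k)) \<le> qbinom CARD('a) (vec.dim W - vec.dim V) (k - vec.dim V)"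
proof (induction "k - vec.dim V" arbitrary: V)
  case 0
  have "U = V" if "U \<in> intermediate_subspaces V W k" for U
  proof -
    from that have "vec.subspace U" "V \<subseteq> U" "vec.dim U = k"
      unfolding intermediate_subspaces_def by auto
    then show "U = V"
      using 0 vec.subspace_dim_equal[of V U] by simp
  qed
  then have "card (intermediate_subspaces V W k) \<le> card {V}"
    by (intro card_mono) auto
  then show ?case
    using 0 by (simp add: qbinom_def)
next
  case (Suc j)
  define q m N where "q = CARD('a)" and "m = vec.dim V" and "N = vec.dim W"
  have q: "2 \<le> q" unfolding q_def by (rule two_le_card_field)
  show ?case
  proof (cases "k \<le> N")
    case False
    have "U \<notin> intermediate_subspaces V W k" for U
    proof
      assume "U \<in> intermediate_subspaces V W k"
      then have "U \<subseteq> W" "vec.dim U = k" unfolding intermediate_subspaces_def by auto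
      then show False using vec.dim_subset[of U W] False unfolding N_def by simp
    qed
    then have "intermediate_subspaces V W k = {}" by blast
    then show ?thesis using qbinom_nonneg q unfolding q_def by simp
  next
    case True
    have "m < k" using Suc.hyps(2) unfolding m_def by linarith
    define a b where "a = N - m - 1" and "b = k - m - 1"
    have N: "N - m = Suc a" and k: "k - m = Suc b"
      using True \<open>m < k\<close> unfolding a_def b_def by auto
    have "real (card (intermediate_subspaces L W k)) \<le> qbinom q a b"
      if "L \<in> intermediate_subspaces V W (m + 1)" for L
    proof -
      from that have "vec.subspace L" "L \<subseteq> W" "vec.dim L = m + 1"
        unfolding intermediate_subspaces_def by auto
      moreover have "j = k - vec.dim L"
        using Suc.hyps(2) \<open>vec.dim L = m + 1\<close> unfolding m_def by simp
      ultimately show ?thesis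
        using Suc.hyps(1)[of L] Suc.prems(2) unfolding q_def N_def a_def b_def by simp
    qed
    then have "real (card (intermediate_subspaces V W k)) * theta q b \<le> theta q a * qbinom q a b"
      using card_intermediate_subspaces_theta_le[OF Suc.prems] True \<open>m < k\<close>
      unfolding q_def m_def N_def a_def b_def by simp
    then have "real (card (intermediate_subspaces V W k)) \<le> theta q a / theta q b * qbinom q a b"
      using theta_pos[OF q] by (simp add: pos_le_divide_eq)
    also have "\<dots> = qbinom q (N - m) (k - m)"
      unfolding N k qbinom_Suc_Suc_theta[OF q] by simp
    finally show ?thesis unfolding q_def m_def N_def .
  qed
qed

section \<open>Affine subspaces\<close>

lemma mem_translation_iff:
  fixes p c :: "'a::ab_group_add"
  shows "c \<in> (+) p ` W \<longleftrightarrow> c - p \<in> W"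
  by (auto simp: image_iff) (metis add.commute diff_add_cancel)

lemma translation_subset_translation_iff:
  fixes p :: "'a::ab_group_add"
  shows "(+) p ` V \<subseteq> (+) p ` U \<longleftrightarrow> V \<subseteq> U"
  by (simp add: inj_image_subset_iff)

lemma translation_Int:
  fixes p :: "'a::ab_group_add"
  shows "(+) p ` U \<inter> (+) p ` W = (+) p ` (U \<inter> W)"
  by (simp add: image_Int)

lemma card_translation:
  fixes p :: "'a::ab_group_add"
  shows "card ((+) p ` W) = card W"
  by (simp add: card_image)

lemma translation_eq_of_mem:
  fixes W :: "('a::field ^ 'n) set"
  assumes "vec.subspace W" and "c \<in> (+) p ` W"
  shows "(+) c ` W = (+) p ` W"
proof -
  have "c - p \<in> W" using assms(2) by (simp add: mem_translation_iff)
  then have "z - c \<in> W \<longleftrightarrow> z - p \<in> W" for z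
    using assms(1) vec.subspace_add[of W "z - c" "c - p"] vec.subspace_diff[of W "z - p" "c - p"]
    by auto
  then show ?thesis by (simp add: set_eq_iff mem_translation_iff)
qed

definition direction :: "('a::field ^ 'n) set \<Rightarrow> ('a ^ 'n) set" where
  "direction S = {x - y | x y. x \<in> S \<and> y \<in> S}"

lemma adim_eq_dim_direction: "adim S = vec.dim (direction S)"
  unfolding adim_def direction_def ..

lemma direction_translation:
  fixes W :: "('a::field ^ 'n) set"
  assumes "vec.subspace W"
  shows "direction ((+) p ` W) = W"
proof
  show "direction ((+) p ` W) \<subseteq> W"
    using assms by (auto simp: direction_def intro: vec.subspace_diff)
  show "W \<subseteq> direction ((+) p ` W)"
  proof
    fix z assume "z \<in> W"
    moreover have "z = (p + z) - (p + 0)" by simp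
    ultimately show "z \<in> direction ((+) p ` W)"
      unfolding direction_def using vec.subspace_0[OF assms] by blast
  qed
qed

lemma adim_translation: "vec.subspace W \<Longrightarrow> adim ((+) p ` W) = vec.dim W"
  by (simp add: adim_eq_dim_direction direction_translation)

lemma affine_subspace_translation: "vec.subspace W \<Longrightarrow> affine_subspace ((+) p ` W)"
  unfolding affine_subspace_def by blast

lemma
  fixes S :: "('a::field ^ 'n) set"
  assumes "affine_subspace S"
  shows subspace_direction: "vec.subspace (direction S)"
    and affine_subspace_nonempty: "S \<noteq> {}"
    and affine_subspace_eq_translation: "c \<in> S \<Longrightarrow> S = (+) c ` direction S"
proof -
  obtain p W where W: "vec.subspace W" and S: "S = (+) p ` W"
    using assms unfolding affine_subspace_def by blast
  then show "vec.subspace (direction S)" by (simp add: direction_translation)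
  show "S \<noteq> {}" using S vec.subspace_0[OF W] by blast
  show "c \<in> S \<Longrightarrow> S = (+) c ` direction S"
    using S W translation_eq_of_mem[of W c p] by (simp add: direction_translation)
qed

lemma meets_t_iff_common_point:
  assumes "affine_subspace A" "affine_subspace B" "c \<in> A" "c \<in> B"
  shows "meets_t t A B \<longleftrightarrow> t \<le> vec.dim (direction A \<inter> direction B)"
proof -
  have "A \<inter> B = (+) c ` (direction A \<inter> direction B)"
    using assms affine_subspace_eq_translation translation_Int by metis
  moreover have "vec.subspace (direction A \<inter> direction B)"
    using assms subspace_direction vec.subspace_inter by blast
  ultimately show ?thesis
    using assms(3,4) by (auto simp: meets_t_def adim_translation)
qed

lemma affine_subspace_subset_iff:
  assumes "affine_subspace A" "affine_subspace B" "c \<in> A" "c \<in> B"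
  shows "A \<subseteq> B \<longleftrightarrow> direction A \<subseteq> direction B"
  using assms affine_subspace_eq_translation translation_subset_translation_iff by metis

lemma meets_t_translations:
  fixes V W :: "('a::field ^ 'n) set"
  assumes "vec.subspace V" "vec.subspace W" "c \<in> (+) p ` V" "c \<in> (+) b ` W"
    and "D \<subseteq> V \<inter> W" "t \<le> vec.dim D"
  shows "meets_t t ((+) p ` V) ((+) b ` W)"
proof -
  have "vec.dim D \<le> vec.dim (V \<inter> W)" using assms(5) by (rule vec.dim_subset)
  then show ?thesis
    using assms meets_t_iff_common_point[of "(+) p ` V" "(+) b ` W" c]
    by (simp add: affine_subspace_translation direction_translation)
qed

lemma exists_tspace_in_Int:
  fixes T A :: "('a::field ^ 'n) set"
  assumes T: "affine_subspace T" and A: "affine_subspace A" and "meets_t t T A"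
  obtains \<tau> where "affine_subspace \<tau>" "adim \<tau> = t" "\<tau> \<subseteq> T" "\<tau> \<subseteq> A"
proof -
  obtain c where c: "c \<in> T" "c \<in> A" using assms(3) unfolding meets_t_def by blast
  let ?D = "direction T \<inter> direction A"
  have D: "vec.subspace ?D" using T A subspace_direction vec.subspace_inter by blast
  have "t \<le> vec.dim ?D" using meets_t_iff_common_point T A c assms(3) by blast
  then have "intermediate_subspaces {0} ?D t \<noteq> {}"
    using D vec.subspace_0[OF D] by (intro intermediate_subspaces_nonempty) simp_all
  then obtain U where "U \<in> intermediate_subspaces {0} ?D t" by blast
  then have U: "vec.subspace U" "U \<subseteq> direction T" "U \<subseteq> direction A" "vec.dim U = t"
    unfolding intermediate_subspaces_def by auto
  have "(+) c ` U \<subseteq> T" "(+) c ` U \<subseteq> A"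
    using U affine_subspace_eq_translation[OF T c(1)] affine_subspace_eq_translation[OF A c(2)]
    by (metis image_mono)+
  moreover have "affine_subspace ((+) c ` U)" "adim ((+) c ` U) = t"
    using U by (simp_all add: affine_subspace_translation adim_translation)
  ultimately show ?thesis using that by blast
qed

lemma card_affine_subspace:
  fixes T :: "('a::{finite,field} ^ 'n) set"
  assumes "affine_subspace T"
  shows "card T = CARD('a) ^ adim T"
proof -
  obtain c where "c \<in> T" using affine_subspace_nonempty[OF assms] by blast
  then have "T = (+) c ` direction T" by (rule affine_subspace_eq_translation[OF assms])
  then have "card T = card (direction T)" by (metis card_translation)
  then show ?thesis
    using card_subspace[OF subspace_direction[OF assms]] by (simp add: adim_eq_dim_direction)
qed

lemma card_cosets_mult:
  fixes T U :: "('a::{finite,field} ^ 'n) set"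
  assumes T: "affine_subspace T" and U: "vec.subspace U" "U \<subseteq> direction T"
  shows "card ((\<lambda>c. (+) c ` U) ` T) * card U = card T"
proof -
  let ?C = "(\<lambda>c. (+) c ` U) ` T"
  have coset_subset: "(+) c ` U \<subseteq> T" if "c \<in> T" for c
  proof -
    have "T = (+) c ` direction T" by (rule affine_subspace_eq_translation[OF T that])
    then show ?thesis using U(2) by (metis image_mono)
  qed
  have mem_coset: "c \<in> (+) c ` U" for c
    using image_eqI[of c "(+) c" 0 U] vec.subspace_0[OF U(1)] by simp
  have "\<Union>?C = T"
  proof
    show "\<Union>?C \<subseteq> T"
      using coset_subset by (intro Union_least) blast
    show "T \<subseteq> \<Union>?C"
      using mem_coset by blast
  qed
  moreover have "disjoint ?C"
  proof (rule disjointI)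
    fix X Y assume "X \<in> ?C" "Y \<in> ?C" "X \<noteq> Y"
    then obtain c d where X: "X = (+) c ` U" and Y: "Y = (+) d ` U" by blast
    show "X \<inter> Y = {}"
    proof (rule ccontr)
      assume "X \<inter> Y \<noteq> {}"
      then obtain z where z: "z \<in> (+) c ` U" "z \<in> (+) d ` U" using X Y by blast
      have "X = (+) z ` U" using translation_eq_of_mem[OF U(1) z(1)] X by simp
      moreover have "Y = (+) z ` U" using translation_eq_of_mem[OF U(1) z(2)] Y by simp
      ultimately show False using \<open>X \<noteq> Y\<close> by simp
    qed
  qed
  ultimately have "card T = sum card ?C"
    using card_Union_disjoint[OF _ finite, of ?C] by simp
  also have "\<dots> = sum (\<lambda>_. card U) ?C"
    by (rule sum.cong) (auto simp: card_translation)
  finally show ?thesis by simp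
qed

lemma card_cosets:
  fixes T U :: "('a::{finite,field} ^ 'n) set"
  assumes T: "affine_subspace T" and U: "vec.subspace U" "U \<subseteq> direction T"
  shows "card ((\<lambda>c. (+) c ` U) ` T) = CARD('a) ^ (adim T - vec.dim U)"
proof -
  have "vec.dim U \<le> adim T"
    using vec.dim_subset[OF U(2)] by (simp add: adim_eq_dim_direction)
  then have "CARD('a) ^ adim T = CARD('a) ^ (adim T - vec.dim U) * CARD('a) ^ vec.dim U"
    by (simp add: power_add[symmetric])
  moreover have "card ((\<lambda>c. (+) c ` U) ` T) * CARD('a) ^ vec.dim U = CARD('a) ^ adim T"
    using card_cosets_mult[OF T U] card_subspace[OF U(1)] card_affine_subspace[OF T] by simp
  ultimately show ?thesis by simp
qed

lemma card_affine_subspaces_le: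
  fixes T :: "('a::{finite,field} ^ 'n) set"
  assumes T: "affine_subspace T"
  shows "real (card {\<tau>. affine_subspace \<tau> \<and> adim \<tau> = t \<and> \<tau> \<subseteq> T})
           \<le> real CARD('a) ^ (adim T - t) * qbinom CARD('a) (adim T) t"
proof -
  define q where "q = CARD('a)"
  let ?I = "intermediate_subspaces {0} (direction T) t"
  let ?cosets = "\<lambda>U. (\<lambda>c. (+) c ` U) ` T"
  have cover: "{\<tau>. affine_subspace \<tau> \<and> adim \<tau> = t \<and> \<tau> \<subseteq> T} \<subseteq> (\<Union>U\<in>?I. ?cosets U)"
  proof
    fix \<tau> assume "\<tau> \<in> {\<tau>. affine_subspace \<tau> \<and> adim \<tau> = t \<and> \<tau> \<subseteq> T}"
    then have \<tau>: "affine_subspace \<tau>" "adim \<tau> = t" "\<tau> \<subseteq> T" by auto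
    obtain c where c: "c \<in> \<tau>" using affine_subspace_nonempty[OF \<tau>(1)] by blast
    then have "c \<in> T" using \<tau>(3) by blast
    then have "direction \<tau> \<subseteq> direction T"
      using affine_subspace_subset_iff[OF \<tau>(1) T c] \<tau>(3) by blast
    then have "direction \<tau> \<in> ?I"
      using subspace_direction[OF \<tau>(1)] vec.subspace_0[OF subspace_direction[OF \<tau>(1)]] \<tau>(2)
      by (simp add: intermediate_subspaces_def adim_eq_dim_direction)
    moreover have "\<tau> \<in> ?cosets (direction \<tau>)"
      using affine_subspace_eq_translation[OF \<tau>(1) c] \<open>c \<in> T\<close> by blast
    ultimately show "\<tau> \<in> (\<Union>U\<in>?I. ?cosets U)" by blast
  qed
  have bound: "real (card (?cosets U)) \<le> real q ^ (adim T - t)" if "U \<in> ?I" for U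
    using that card_cosets[OF T] unfolding intermediate_subspaces_def q_def by simp
  have "real (card {\<tau>. affine_subspace \<tau> \<and> adim \<tau> = t \<and> \<tau> \<subseteq> T})
      \<le> real (card ?I) * real q ^ (adim T - t)"
    by (rule card_le_of_cover[OF finite finite cover bound])
  also have "\<dots> \<le> qbinom q (adim T) t * real q ^ (adim T - t)"
    using card_intermediate_subspaces_le[of "{0}" "direction T" t] subspace_direction[OF T]
      vec.subspace_0[OF subspace_direction[OF T]]
    by (intro mult_right_mono) (simp_all add: adim_eq_dim_direction q_def)
  finally show ?thesis by (simp add: q_def mult.commute)
qed

lemma card_kspaces_containing_le:
  fixes SS :: "('a::{finite,field} ^ 'n) set set"
  assumes SS: "\<forall>A\<in>SS. kspace k A" and \<tau>: "affine_subspace \<tau>"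
  shows "real (card {A\<in>SS. \<tau> \<subseteq> A}) \<le> qbinom CARD('a) (CARD('n) - adim \<tau>) (k - adim \<tau>)"
proof -
  obtain p where p: "p \<in> \<tau>" using affine_subspace_nonempty[OF \<tau>] by blast
  let ?X = "{A\<in>SS. \<tau> \<subseteq> A}"
  have A: "affine_subspace A" "p \<in> A" "\<tau> \<subseteq> A" "adim A = k" if "A \<in> ?X" for A
    using that SS p unfolding kspace_def by auto
  have "inj_on direction ?X"
  proof (rule inj_onI)
    fix A B assume "A \<in> ?X" "B \<in> ?X" "direction A = direction B"
    then show "A = B" using A affine_subspace_eq_translation by metis
  qed
  then have "card ?X = card (direction ` ?X)"
    by (rule card_image[symmetric])
  also have "\<dots> \<le> card (intermediate_subspaces (direction \<tau>) UNIV k)"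
  proof (rule card_mono[OF finite], rule subsetI)
    fix D assume "D \<in> direction ` ?X"
    then obtain A where "A \<in> ?X" and D: "D = direction A" by blast
    then have "direction \<tau> \<subseteq> direction A"
      using A affine_subspace_subset_iff[OF \<tau> _ p] by blast
    then show "D \<in> intermediate_subspaces (direction \<tau>) UNIV k"
      using A[OF \<open>A \<in> ?X\<close>] subspace_direction D
      by (simp add: intermediate_subspaces_def adim_eq_dim_direction)
  qed
  finally have "real (card ?X) \<le> real (card (intermediate_subspaces (direction \<tau>) UNIV k))"
    by simp
  also have "\<dots> \<le> qbinom CARD('a) (vec.dim (UNIV :: ('a ^ 'n) set) - adim \<tau>) (k - adim \<tau>)"
    using card_intermediate_subspaces_le[OF subspace_direction[OF \<tau>] vec.subspace_UNIV]
    by (simp add: adim_eq_dim_direction)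
  finally show ?thesis by (simp only: vec_dim_card)
qed

section \<open>Families of pairwise t-intersecting k-spaces\<close>

lemma psi_le_adim:
  assumes "affine_subspace T" and "\<forall>A\<in>SS. meets_t t T A"
  shows "psi t SS \<le> adim T"
  unfolding psi_def by (rule Least_le) (use assms in blast)

lemma psi_attained:
  fixes SS :: "('a::field ^ 'n) set set"
  assumes "\<forall>A\<in>SS. affine_subspace A \<and> t \<le> adim A"
  obtains T where "affine_subspace T" "adim T = psi t SS" "\<forall>A\<in>SS. meets_t t T A"
proof -
  have "affine_subspace (UNIV :: ('a ^ 'n) set)"
    using affine_subspace_translation[OF vec.subspace_UNIV, of 0] by simp
  moreover have "meets_t t UNIV A" if "A \<in> SS" for A
  proof -
    have "A \<noteq> {}" "t \<le> adim A" using assms that affine_subspace_nonempty by blast+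
    then show ?thesis by (simp add: meets_t_def)
  qed
  ultimately have "\<exists>T. affine_subspace T \<and> adim T = adim (UNIV :: ('a ^ 'n) set) \<and> (\<forall>A\<in>SS. meets_t t T A)"
    by blast
  then have "\<exists>T. affine_subspace T \<and> adim T = psi t SS \<and> (\<forall>A\<in>SS. meets_t t T A)"
    unfolding psi_def by (rule LeastI)
  then show ?thesis using that by blast
qed

text \<open>With \<open>c\<close> a common point of \<open>A\<close> and \<open>b + VB\<close>, take \<open>Q = span (V \<union> {c - p} \<union> (direction A \<inter> VB))\<close>.
  Then \<open>M \<subseteq> Q + VB\<close> gives the dimension bound, and \<open>Q \<noteq> V\<close> because otherwise \<open>p + V\<close> would meet
  \<open>b + VB\<close> in at least a \<open>t\<close>-space.\<close>

lemma direction_through_meeting: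
  fixes p b :: "'a::field ^ 'n"
  assumes V: "vec.subspace V" and VB: "vec.subspace VB" "vec.dim VB = k"
    and not_meet: "\<not> meets_t t ((+) p ` V) ((+) b ` VB)"
    and A: "affine_subspace A" "(+) p ` V \<subseteq> A" "meets_t t A ((+) b ` VB)"
  defines "M \<equiv> vec.span (insert (b - p) (V \<union> VB))"
  obtains Q where "vec.subspace Q" "V \<subseteq> Q" "vec.dim V < vec.dim Q" "Q \<subseteq> direction A" "Q \<subseteq> M"
    "vec.dim M \<le> vec.dim Q + (k - t)"
proof -
  obtain c where cA: "c \<in> A" and cB: "c \<in> (+) b ` VB" using A(3) unfolding meets_t_def by blast
  define VA where "VA = direction A"
  have VA: "vec.subspace VA" unfolding VA_def using A(1) by (rule subspace_direction)
  have "p \<in> A" using A(2) vec.subspace_0[OF V] by force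
  then have A_eq: "A = (+) p ` VA" unfolding VA_def by (rule affine_subspace_eq_translation[OF A(1)])
  have B_eq: "(+) b ` VB = (+) c ` VB" using translation_eq_of_mem[OF VB(1) cB] ..
  have VVA: "V \<subseteq> VA" using A(2) A_eq translation_subset_translation_iff by metis
  have cp: "c - p \<in> VA" using cA A_eq mem_translation_iff by blast
  have cb: "c - b \<in> VB" using cB mem_translation_iff by blast
  define D where "D = VA \<inter> VB"
  have "t \<le> vec.dim D"
    using meets_t_iff_common_point[OF A(1) _ cA, of "(+) c ` VB"] A(3) B_eq VB(1) vec.subspace_0[OF VB(1)]
    by (simp add: affine_subspace_translation direction_translation D_def VA_def mem_translation_iff)
  define Q where "Q = vec.span (insert (c - p) (V \<union> D))"
  have Q: "vec.subspace Q" "V \<subseteq> Q" "D \<subseteq> Q" "c - p \<in> Q"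
    unfolding Q_def using vec.span_superset[of "insert (c - p) (V \<union> D)"] by simp_all
  have "Q \<subseteq> VA"
    unfolding Q_def D_def using VA VVA cp by (intro vec.span_minimal) auto
  have span_M: "insert (b - p) (V \<union> VB) \<subseteq> M"
    unfolding M_def by (rule vec.span_superset)
  then have "(c - b) + (b - p) \<in> M"
    unfolding M_def using cb by (intro vec.span_add) (auto intro: vec.span_base)
  then have "Q \<subseteq> M"
    unfolding Q_def D_def using span_M by (intro vec.span_minimal) (auto simp: M_def)
  have "M \<subseteq> {x + y | x y. x \<in> Q \<and> y \<in> VB}"
    unfolding M_def using Q(1,2,4) VB(1) cb by (rule span_insert_subset_sums)
  then have "vec.dim M + vec.dim (Q \<inter> VB) \<le> vec.dim Q + k"
    using dim_le_dim_sums[OF Q(1) VB(1)] VB(2) by simp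
  moreover have "vec.dim D \<le> vec.dim (Q \<inter> VB)"
    using Q(3) unfolding D_def by (intro vec.dim_subset) auto
  ultimately have "vec.dim M \<le> vec.dim Q + (k - t)"
    using \<open>t \<le> vec.dim D\<close> by linarith
  moreover have "vec.dim V < vec.dim Q"
  proof (rule ccontr)
    assume "\<not> vec.dim V < vec.dim Q"
    then have "Q = V" using vec.subspace_dim_equal[OF V Q(1,2)] by simp
    then have "c \<in> (+) p ` V" "D \<subseteq> V \<inter> VB"
      using Q(3,4) mem_translation_iff unfolding D_def by blast+
    then have "meets_t t ((+) p ` V) ((+) b ` VB)"
      using meets_t_translations[OF V VB(1) _ cB] \<open>t \<le> vec.dim D\<close> by blast
    with not_meet show False by contradiction
  qed
  ultimately show ?thesis
    using that Q(1,2) \<open>Q \<subseteq> VA\<close> \<open>Q \<subseteq> M\<close> unfolding VA_def by blast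
qed

text \<open>The dimension bound on \<open>W\<close> forces \<open>W\<close> to meet the space \<open>Q\<close> of the previous lemma in more
  than \<open>V\<close>.\<close>

lemma meeting_contains_extension:
  fixes p b :: "'a::field ^ 'n" and V VB W :: "('a ^ 'n) set"
  defines "M \<equiv> vec.span (insert (b - p) (V \<union> VB))"
  assumes V: "vec.subspace V" and VB: "vec.subspace VB" "vec.dim VB = k"
    and not_meet: "\<not> meets_t t ((+) p ` V) ((+) b ` VB)"
    and W: "vec.subspace W" "V \<subseteq> W" "W \<subseteq> M" "min (vec.dim M) (vec.dim V + (k - t) + 1) \<le> vec.dim W"
    and A: "affine_subspace A" "(+) p ` V \<subseteq> A" "meets_t t A ((+) b ` VB)"
  shows "\<exists>L\<in>intermediate_subspaces V W (vec.dim V + 1). (+) p ` L \<subseteq> A"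
proof -
  obtain Q where Q: "vec.subspace Q" "V \<subseteq> Q" "vec.dim V < vec.dim Q" "Q \<subseteq> direction A"
    "Q \<subseteq> M" "vec.dim M \<le> vec.dim Q + (k - t)"
    using direction_through_meeting[OF V VB not_meet A] unfolding M_def by blast
  have "vec.dim W + vec.dim Q \<le> vec.dim M + vec.dim (W \<inter> Q)"
    using W Q by (intro dim_add_le_dim_Int) (simp_all add: M_def)
  then have "vec.dim V < vec.dim (W \<inter> Q)"
    using Q(3,6) W(4) by linarith
  then have "\<not> W \<inter> Q \<subseteq> V"
    using vec.dim_subset[of "W \<inter> Q" V] by linarith
  then obtain u where u: "u \<in> W" "u \<in> Q" "u \<notin> V" by blast
  let ?L = "vec.span (insert u V)"
  have "?L \<in> intermediate_subspaces V W (vec.dim V + 1)"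
    using V W(1,2) u by (intro span_insert_mem_intermediate_subspaces) auto
  moreover have "?L \<subseteq> direction A"
    using subspace_direction[OF A(1)] Q(2,4) u(2) by (intro vec.span_minimal) auto
  moreover have "p \<in> A" using A(2) vec.subspace_0[OF V] by force
  ultimately show ?thesis
    using affine_subspace_eq_translation[OF A(1)] by (metis image_mono)
qed

lemma extensions_meeting_covered:
  fixes p b :: "'a::{finite,field} ^ 'n"
  assumes V: "vec.subspace V" and VB: "vec.subspace VB" "vec.dim VB = k"
    and not_meet: "\<not> meets_t t ((+) p ` V) ((+) b ` VB)"
  obtains N where "N \<subseteq> intermediate_subspaces V UNIV (vec.dim V + 1)"
    and "real (card N) \<le> theta CARD('a) (k - t)"
    and "\<And>A. affine_subspace A \<Longrightarrow> (+) p ` V \<subseteq> A \<Longrightarrow> meets_t t A ((+) b ` VB) \<Longrightarrow>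
           \<exists>L\<in>N. (+) p ` L \<subseteq> A"
proof -
  define M where "M = vec.span (insert (b - p) (V \<union> VB))"
  have M: "vec.subspace M" "V \<subseteq> M"
    unfolding M_def using vec.span_superset[of "insert (b - p) (V \<union> VB)"] by simp_all
  define d where "d = min (vec.dim M) (vec.dim V + (k - t) + 1)"
  have "vec.dim V \<le> d"
    unfolding d_def using vec.dim_subset[OF M(2)] by simp
  then have "intermediate_subspaces V M d \<noteq> {}"
    using V M by (intro intermediate_subspaces_nonempty) (simp_all add: d_def)
  then obtain W where "W \<in> intermediate_subspaces V M d" by blast
  then have W: "vec.subspace W" "V \<subseteq> W" "W \<subseteq> M" "vec.dim W = d"
    unfolding intermediate_subspaces_def by auto
  define N where "N = intermediate_subspaces V W (vec.dim V + 1)"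
  have "N \<subseteq> intermediate_subspaces V UNIV (vec.dim V + 1)"
    unfolding N_def intermediate_subspaces_def by auto
  moreover have "real (card N) \<le> theta CARD('a) (k - t)"
  proof (cases "vec.dim V < d")
    case True
    then have "real (card N) = theta CARD('a) (d - vec.dim V - 1)"
      unfolding N_def using card_covering_subspaces[OF V W(1,2)] W(4) by simp
    also have "\<dots> \<le> theta CARD('a) (k - t)"
      using two_le_card_field by (rule theta_mono) (simp add: d_def)
    finally show ?thesis .
  next
    case False
    have "L \<notin> N" for L
    proof
      assume "L \<in> N"
      then have "L \<subseteq> W" "vec.dim L = vec.dim V + 1"
        unfolding N_def intermediate_subspaces_def by auto
      then show False using vec.dim_subset[of L W] W(4) False by simp
    qed
    then have "N = {}" by blast
    moreover have "0 < theta CARD('a) (k - t)"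
      using two_le_card_field by (rule theta_pos)
    ultimately show ?thesis by simp
  qed
  moreover have "\<exists>L\<in>N. (+) p ` L \<subseteq> A"
    if "affine_subspace A" "(+) p ` V \<subseteq> A" "meets_t t A ((+) b ` VB)" for A
    unfolding N_def using meeting_contains_extension[OF V VB not_meet W(1,2)] W(3,4) that
    unfolding M_def d_def by simp
  ultimately show ?thesis using that by blast
qed

lemma card_members_containing_le:
  fixes SS :: "('a::{finite,field} ^ 'n) set set"
  assumes SS: "\<forall>A\<in>SS. kspace k A" and pairwise: "\<forall>A\<in>SS. \<forall>B\<in>SS. meets_t t A B"
    and psi: "psi t SS = t + x"
  shows "j \<le> x \<Longrightarrow> affine_subspace \<tau> \<Longrightarrow> adim \<tau> = t + x - j \<Longrightarrow>
    real (card {A\<in>SS. \<tau> \<subseteq> A})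
      \<le> theta CARD('a) (k - t) ^ j * qbinom CARD('a) (CARD('n) - t - x) (k - t - x)"
proof (induction j arbitrary: \<tau>)
  case 0
  then show ?case using card_kspaces_containing_le[OF SS, of \<tau>] by simp
next
  case (Suc j)
  define \<theta> qb where "\<theta> = theta CARD('a) (k - t)"
    and "qb = qbinom CARD('a) (CARD('n) - t - x) (k - t - x)"
  have "\<not> (\<forall>A\<in>SS. meets_t t \<tau> A)"
  proof
    assume "\<forall>A\<in>SS. meets_t t \<tau> A"
    then have "psi t SS \<le> adim \<tau>" by (rule psi_le_adim[OF Suc.prems(2)])
    then show False using psi Suc.prems(1,3) by simp
  qed
  then obtain B where B: "B \<in> SS" "\<not> meets_t t \<tau> B" by blast
  then have aB: "affine_subspace B" "adim B = k"
    using SS unfolding kspace_def by auto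
  obtain p b where p: "p \<in> \<tau>" and b: "b \<in> B"
    using affine_subspace_nonempty[OF Suc.prems(2)] affine_subspace_nonempty[OF aB(1)] by blast
  define V VB where "V = direction \<tau>" and "VB = direction B"
  have V: "vec.subspace V" "\<tau> = (+) p ` V" "vec.dim V + 1 = t + x - j"
    unfolding V_def using subspace_direction[OF Suc.prems(2)] Suc.prems
      affine_subspace_eq_translation[OF Suc.prems(2) p] by (simp_all add: adim_eq_dim_direction)
  have VB: "vec.subspace VB" "B = (+) b ` VB" "vec.dim VB = k"
    unfolding VB_def using subspace_direction[OF aB(1)] aB
      affine_subspace_eq_translation[OF aB(1) b] by (simp_all add: adim_eq_dim_direction)
  have "\<not> meets_t t ((+) p ` V) ((+) b ` VB)"
    using B(2) V(2) VB(2) by simp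
  then obtain N where N: "N \<subseteq> intermediate_subspaces V UNIV (vec.dim V + 1)" "real (card N) \<le> \<theta>"
    and extend: "\<And>A. affine_subspace A \<Longrightarrow> (+) p ` V \<subseteq> A \<Longrightarrow> meets_t t A ((+) b ` VB) \<Longrightarrow>
                   \<exists>L\<in>N. (+) p ` L \<subseteq> A"
    unfolding \<theta>_def by (rule extensions_meeting_covered[OF V(1) VB(1,3)]) blast
  have cover: "{A\<in>SS. \<tau> \<subseteq> A} \<subseteq> (\<Union>L\<in>N. {A\<in>SS. (+) p ` L \<subseteq> A})"
  proof
    fix A assume A: "A \<in> {A\<in>SS. \<tau> \<subseteq> A}"
    then have "affine_subspace A" "(+) p ` V \<subseteq> A" "meets_t t A ((+) b ` VB)"
      using SS pairwise B(1) V(2) VB(2) unfolding kspace_def by auto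
    then have "\<exists>L\<in>N. (+) p ` L \<subseteq> A" by (rule extend)
    then show "A \<in> (\<Union>L\<in>N. {A\<in>SS. (+) p ` L \<subseteq> A})" using A by blast
  qed
  have bound: "real (card {A\<in>SS. (+) p ` L \<subseteq> A}) \<le> \<theta> ^ j * qb" if "L \<in> N" for L
  proof -
    from that N(1) have "vec.subspace L" "vec.dim L = vec.dim V + 1"
      unfolding intermediate_subspaces_def by auto
    then have "affine_subspace ((+) p ` L)" "adim ((+) p ` L) = t + x - j"
      using V(3) by (simp_all add: affine_subspace_translation adim_translation)
    then show ?thesis
      using Suc.IH Suc.prems(1) unfolding \<theta>_def qb_def by simp
  qed
  have "real (card {A\<in>SS. \<tau> \<subseteq> A}) \<le> real (card N) * (\<theta> ^ j * qb)"
    by (rule card_le_of_cover[OF finite finite cover bound])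
  also have "\<dots> \<le> \<theta> * (\<theta> ^ j * qb)"
    using N(2) theta_pos[OF two_le_card_field] qbinom_nonneg[of "CARD('a)"]
    by (intro mult_right_mono) (simp_all add: \<theta>_def qb_def less_imp_le)
  finally show ?case unfolding \<theta>_def qb_def by simp
qed

lemma card_le_card_tspaces_mult:
  fixes SS :: "('a::{finite,field} ^ 'n) set set"
  assumes T: "affine_subspace T" and meet: "\<forall>A\<in>SS. affine_subspace A \<and> meets_t t T A"
    and bound: "\<And>\<tau>. affine_subspace \<tau> \<Longrightarrow> adim \<tau> = t \<Longrightarrow> real (card {A\<in>SS. \<tau> \<subseteq> A}) \<le> c"
  shows "real (card SS) \<le> real (card {\<tau>. affine_subspace \<tau> \<and> adim \<tau> = t \<and> \<tau> \<subseteq> T}) * c"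
proof (rule card_le_of_cover[OF finite finite])
  show "SS \<subseteq> (\<Union>\<tau>\<in>{\<tau>. affine_subspace \<tau> \<and> adim \<tau> = t \<and> \<tau> \<subseteq> T}. {A\<in>SS. \<tau> \<subseteq> A})"
  proof
    fix A assume "A \<in> SS"
    then obtain \<tau> where "affine_subspace \<tau>" "adim \<tau> = t" "\<tau> \<subseteq> T" "\<tau> \<subseteq> A"
      using exists_tspace_in_Int[OF T] meet by blast
    then show "A \<in> (\<Union>\<tau>\<in>{\<tau>. affine_subspace \<tau> \<and> adim \<tau> = t \<and> \<tau> \<subseteq> T}. {A\<in>SS. \<tau> \<subseteq> A})"
      using \<open>A \<in> SS\<close> by blast
  qed
qed (use bound in auto)

theorem mainTheorem13:
  fixes SS :: "('a::{finite,field} ^ 'n) set set"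
    and k t x :: nat
  defines "q \<equiv> CARD('a)" and "n \<equiv> CARD('n)"
  assumes "k > t + 1" and "n > 2 * k - t"
    and "max_t_intersecting k t SS"
    and "psi t SS = t + x" and "x \<ge> 2"
  shows "real (card SS) \<le> real q ^ x * qbinom q (t + x) x * (theta q (k - t)) ^ x
            * qbinom q (n - t - x) (k - t - x)"
proof -
  define qb where "qb = qbinom q (n - t - x) (k - t - x)"
  have q: "2 \<le> q" unfolding q_def by (rule two_le_card_field)
  have SS: "\<forall>A\<in>SS. kspace k A" and pairwise: "\<forall>A\<in>SS. \<forall>B\<in>SS. meets_t t A B"
    using assms(5) unfolding max_t_intersecting_def by auto
  obtain T where T: "affine_subspace T" "adim T = t + x" "\<forall>A\<in>SS. meets_t t T A"
    using psi_attained[of SS t] SS assms(3,6) unfolding kspace_def by auto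
  let ?TT = "{\<tau>. affine_subspace \<tau> \<and> adim \<tau> = t \<and> \<tau> \<subseteq> T}"
  have "real (card SS) \<le> real (card ?TT) * (theta q (k - t) ^ x * qb)"
  proof (rule card_le_card_tspaces_mult[OF T(1)])
    show "\<forall>A\<in>SS. affine_subspace A \<and> meets_t t T A"
      using SS T(3) unfolding kspace_def by blast
    show "real (card {A\<in>SS. \<tau> \<subseteq> A}) \<le> theta q (k - t) ^ x * qb"
      if "affine_subspace \<tau>" "adim \<tau> = t" for \<tau>
      using card_members_containing_le[OF SS pairwise assms(6), of x \<tau>] that
      unfolding q_def n_def qb_def by simp
  qed
  also have "\<dots> \<le> real q ^ x * qbinom q (t + x) x * (theta q (k - t) ^ x * qb)"
  proof (rule mult_right_mono)
    show "real (card ?TT) \<le> real q ^ x * qbinom q (t + x) x"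
      using card_affine_subspaces_le[OF T(1), of t] T(2) qbinom_symmetric[OF q, of x t]
      unfolding q_def by (simp add: add.commute)
    show "0 \<le> theta q (k - t) ^ x * qb"
      using theta_pos[OF q] qbinom_nonneg q unfolding qb_def by (simp add: less_imp_le)
  qed
  finally show ?thesis unfolding qb_def by (simp add: mult.assoc)
qed

end
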